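(* Let $\phi\neq\psi$ be two seeds. Then $perms(\phi)\cap perms(\psi)\neq\emptyset$ if and only if either $mis(\phi)=mis(\psi)\oplus 1$ or $mis(\psi)=mis(\phi)\oplus 1$, and moreover the sequence obtained from $\phi$ by deleting the entry $mis(\psi)$ coincides with the sequence obtained from $\psi$ by deleting the entry $mis(\phi)$.
   Context: Fix an integer $n\ge 5$. An $n$-permutation is a sequence $(a_1,\dots,a_n)$ of the distinct elements of $\{1,\dots,n\}$. On $\{1,\dots,n-1\}$ let $a\oplus 1=a+1$ for $a<n-1$ and $(n-1)\oplus 1=1$. A seed is an $(n-1)$-tuple $\psi=(a_1,\dots,a_{n-1})$ of distinct elements of $\{1,\dots,n\}$ with $a_1=n$ and $a_2\oplus1\notin\{a_1,\dots,a_{n-1}\}$; its missing element is $mis(\psi)=a_2\oplus 1$. The package $perms(\psi)$ is the set of all $n$-permutations obtained from $\psi$ by inserting $mis(\psi)$ at any position and then applying any cyclic rotation. *)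

theory Defs
  imports Main
begin

definition oplus1 :: "nat \<Rightarrow> nat \<Rightarrow> nat" where
  "oplus1 n a = (if a < n - 1 then a + 1 else 1)"

text \<open>A seed: an (n-1)-tuple (list, 0-indexed, so a_1 = psi!0, a_2 = psi!1) of distinct
  elements of {1..n} with a_1 = n and a_2 (+) 1 not among its entries.\<close>
definition seed :: "nat \<Rightarrow> nat list \<Rightarrow> bool" where
  "seed n psi \<longleftrightarrow> length psi = n - 1 \<and> distinct psi \<and> set psi \<subseteq> {1..n}
     \<and> psi ! 0 = n \<and> oplus1 n (psi ! 1) \<notin> set psi"

definition mis :: "nat \<Rightarrow> nat list \<Rightarrow> nat" where
  "mis n psi = oplus1 n (psi ! 1)"

definition perms :: "nat \<Rightarrow> nat list \<Rightarrow> nat list set" where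
  "perms n psi = {rotate k (take i psi @ mis n psi # drop i psi) | i k. i \<le> length psi}"

end

theory Submission
  imports Defs
begin

text \<open>Every element of a package is a rotation of a list that starts with \<open>n\<close>, and a
  rotation of a distinct list is pinned down by where its first entry goes; so two packages
  meet exactly when inserting the missing elements into the two seeds yields the same list \<open>L\<close>.
  Deleting either missing element from \<open>L\<close> recovers the corresponding seed, which gives
  the deletion identity, and comparing the second entry of \<open>L\<close> gives the successor relation
  between the missing elements. Conversely, if \<open>mis(\<psi>) = mis(\<phi>) \<oplus> 1\<close> then the
  second entry of \<open>\<psi>\<close> is \<open>mis(\<phi>)\<close>, and inserting \<open>mis(\<phi>)\<close> right after the leading
  \<open>n\<close> of \<open>\<phi>\<close> gives a list from which deleting \<open>mis(\<psi>)\<close> leaves \<open>\<psi>\<close>.\<close>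

lemma set_take_Cons_drop: "set (take i xs @ x # drop i xs) = insert x (set xs)"
proof -
  have "set (take i xs) \<union> set (drop i xs) = set xs"
    by (metis append_take_drop_id set_append)
  then show ?thesis by auto
qed

lemma distinct_take_Cons_drop:
  "distinct xs \<Longrightarrow> x \<notin> set xs \<Longrightarrow> distinct (take i xs @ x # drop i xs)"
  using distinct_append[of "take i xs" "drop i xs"]
  by (auto dest: in_set_takeD in_set_dropD)

lemma removeAll_take_Cons_drop:
  "x \<notin> set xs \<Longrightarrow> removeAll x (take i xs @ x # drop i xs) = xs"
  by (metis append_take_drop_id removeAll_append removeAll_id removeAll.simps(2))

lemma take_Cons_drop_removeAll:
  assumes "distinct ys" "x \<in> set ys"
  shows "\<exists>i \<le> length (removeAll x ys). ys = take i (removeAll x ys) @ x # drop i (removeAll x ys)"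
proof -
  obtain us vs where ys: "ys = us @ x # vs" and "x \<notin> set us" "x \<notin> set vs"
    using split_list[OF assms(2)] assms(1) by auto
  then have "removeAll x ys = us @ vs" by simp
  with ys show ?thesis by (intro exI[of _ "length us"]) simp
qed

lemma nth_one_take_Cons_drop:
  "1 \<le> i \<Longrightarrow> i \<le> length xs \<Longrightarrow>
    (take i xs @ x # drop i xs) ! 1 = (if i = 1 then x else xs ! 1)"
  by (auto simp: nth_append)

lemma rotate_eq_rotate_imp_eq:
  assumes rot: "rotate k xs = rotate l ys" and "distinct xs" and len: "length xs = length ys"
    and "xs \<noteq> []" and hd: "hd xs = hd ys"
  shows "xs = ys"
proof -
  let ?L = "length xs"
  define m where "m = (?L - l mod ?L + k) mod ?L"
  have "?L > 0" using \<open>xs \<noteq> []\<close> by simp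
  have "(?L - l mod ?L + l) mod ?L = (?L - l mod ?L + l mod ?L) mod ?L"
    by (simp add: mod_add_right_eq)
  also have "\<dots> = 0" using \<open>?L > 0\<close> by simp
  finally have "ys = rotate ((?L - l mod ?L + l) mod ?L) ys" by simp
  also have "\<dots> = rotate (?L - l mod ?L) (rotate l ys)"
    by (simp add: rotate_rotate len rotate_conv_mod[symmetric])
  also have "\<dots> = rotate m xs"
    by (simp add: rot[symmetric] rotate_rotate m_def rotate_conv_mod[symmetric])
  finally have ys: "ys = rotate m xs" .
  have "m < ?L" using \<open>?L > 0\<close> by (simp add: m_def)
  have "xs ! 0 = xs ! m"
    using hd ys \<open>xs \<noteq> []\<close> \<open>m < ?L\<close> by (simp add: hd_conv_nth nth_rotate)
  then have "m = 0"
    using \<open>distinct xs\<close> \<open>m < ?L\<close> \<open>?L > 0\<close> nth_eq_iff_index_eq by metis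
  then show ?thesis using ys by simp
qed

lemma oplus1_range: "2 \<le> n \<Longrightarrow> oplus1 n a \<in> {1..n-1}"
  by (auto simp: oplus1_def)

lemma inj_on_oplus1: "inj_on (oplus1 n) {1..n-1}"
  by (auto simp: inj_on_def oplus1_def split: if_splits)

lemma oplus1_neq_self: "3 \<le> n \<Longrightarrow> oplus1 n a \<noteq> a"
  by (auto simp: oplus1_def)

lemma mis_notin_seed: "seed n psi \<Longrightarrow> mis n psi \<notin> set psi"
  by (simp add: seed_def mis_def)

lemma seed_eq_Cons:
  assumes "3 \<le> n" "seed n psi"
  shows "psi = n # psi ! 1 # drop 2 psi"
proof -
  have "length psi = n - 1" "psi ! 0 = n" using assms(2) by (auto simp: seed_def)
  moreover obtain a b t where "psi = a # b # t"
    using \<open>length psi = n - 1\<close> assms(1) by (cases psi rule: remdups_adj.cases) auto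
  ultimately show ?thesis by simp
qed

lemma seed_nth_one_range:
  assumes "3 \<le> n" "seed n psi"
  shows "psi ! 1 \<in> {1..n-1}"
proof -
  have "psi = n # psi ! 1 # drop 2 psi" by (rule seed_eq_Cons[OF assms])
  then have "psi ! 1 \<noteq> n" "psi ! 1 \<in> set psi"
    using assms(2) unfolding seed_def by (metis distinct_length_2_or_more, metis list.set_intros)
  moreover have "set psi \<subseteq> {1..n}" using assms(2) by (simp add: seed_def)
  ultimately show ?thesis by fastforce
qed

definition insert_mis :: "nat \<Rightarrow> nat list \<Rightarrow> nat \<Rightarrow> nat list" where
  "insert_mis n psi i = take i psi @ mis n psi # drop i psi"

lemma distinct_insert_mis: "seed n psi \<Longrightarrow> distinct (insert_mis n psi i)"
  unfolding insert_mis_def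
  by (intro distinct_take_Cons_drop mis_notin_seed) (simp_all add: seed_def)

lemma removeAll_mis_insert_mis: "seed n psi \<Longrightarrow> removeAll (mis n psi) (insert_mis n psi i) = psi"
  unfolding insert_mis_def by (intro removeAll_take_Cons_drop mis_notin_seed)

lemma insert_mis_in_perms: "i \<le> length psi \<Longrightarrow> insert_mis n psi i \<in> perms n psi"
  unfolding perms_def insert_mis_def by (intro CollectI exI[of _ i] exI[of _ 0]) simp

text \<open>Inserting at the front is a rotation of inserting at the back, so positions
  \<open>1..length psi\<close> suffice.\<close>
lemma perms_imp_rotate_insert_mis:
  assumes "psi \<noteq> []" "x \<in> perms n psi"
  shows "\<exists>i k. 1 \<le> i \<and> i \<le> length psi \<and> x = rotate k (insert_mis n psi i)"
proof -
  obtain i k where x: "x = rotate k (take i psi @ mis n psi # drop i psi)" "i \<le> length psi"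
    using assms(2) by (auto simp: perms_def)
  show ?thesis
  proof (cases "i = 0")
    case True
    have "x = rotate k (rotate (length psi) (psi @ [mis n psi]))"
      using x True by (simp add: rotate_append)
    also have "\<dots> = rotate (k + length psi) (insert_mis n psi (length psi))"
      by (simp add: rotate_rotate insert_mis_def)
    moreover have "1 \<le> length psi" using assms(1) by (simp add: Suc_leI)
    ultimately show ?thesis by blast
  next
    case False
    with x show ?thesis unfolding insert_mis_def by (intro exI[of _ i] exI[of _ k]) simp
  qed
qed

lemma perms_meet_imp_insert_mis_eq:
  assumes "3 \<le> n" "seed n phi" "seed n psi" "x \<in> perms n phi" "x \<in> perms n psi"
  shows "\<exists>i j. 1 \<le> i \<and> i \<le> length phi \<and> 1 \<le> j \<and> j \<le> length psi
    \<and> insert_mis n phi i = insert_mis n psi j"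
proof -
  have ne: "phi \<noteq> []" "psi \<noteq> []"
    using seed_eq_Cons[OF assms(1,2)] seed_eq_Cons[OF assms(1,3)] by (metis list.distinct(1))+
  obtain i k where i: "1 \<le> i" "i \<le> length phi" "x = rotate k (insert_mis n phi i)"
    using perms_imp_rotate_insert_mis[OF ne(1) assms(4)] by blast
  obtain j l where j: "1 \<le> j" "j \<le> length psi" "x = rotate l (insert_mis n psi j)"
    using perms_imp_rotate_insert_mis[OF ne(2) assms(5)] by blast
  have "insert_mis n phi i = insert_mis n psi j"
  proof (rule rotate_eq_rotate_imp_eq)
    show "rotate k (insert_mis n phi i) = rotate l (insert_mis n psi j)" using i j by simp
    show "distinct (insert_mis n phi i)" using assms(2) by (rule distinct_insert_mis)
    show "length (insert_mis n phi i) = length (insert_mis n psi j)"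
      using assms(2,3) i j by (simp add: insert_mis_def seed_def)
    show "insert_mis n phi i \<noteq> []" by (simp add: insert_mis_def)
    have "hd (insert_mis n phi i) = n" "hd (insert_mis n psi j) = n"
      using i(1) j(1) seed_eq_Cons[OF assms(1,2)] seed_eq_Cons[OF assms(1,3)]
      by (metis Suc_le_D append_Cons list.sel(1) take_Suc_Cons insert_mis_def One_nat_def)+
    then show "hd (insert_mis n phi i) = hd (insert_mis n psi j)" by simp
  qed
  with i j show ?thesis by blast
qed

lemma insert_mis_eq_imp_removeAll_eq:
  assumes "seed n phi" "seed n psi" "insert_mis n phi i = insert_mis n psi j"
  shows "removeAll (mis n psi) phi = removeAll (mis n phi) psi"
proof -
  have "phi = removeAll (mis n phi) (insert_mis n phi i)"
    using assms(1) by (simp add: removeAll_mis_insert_mis)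
  moreover have "psi = removeAll (mis n psi) (insert_mis n phi i)"
    using assms(2) by (simp add: removeAll_mis_insert_mis assms(3))
  ultimately show ?thesis by (metis removeAll_commute)
qed

text \<open>Compare the second entries: each is either the inserted element or the seed's own
  second entry, whose successor is the seed's missing element.\<close>
lemma insert_mis_eq_imp_mis_adjacent:
  assumes "seed n phi" "seed n psi" "phi \<noteq> psi"
    and "1 \<le> i" "i \<le> length phi" "1 \<le> j" "j \<le> length psi"
    and eq: "insert_mis n phi i = insert_mis n psi j"
  shows "mis n phi = oplus1 n (mis n psi) \<or> mis n psi = oplus1 n (mis n phi)"
proof -
  have "mis n phi \<noteq> mis n psi"
  proof
    assume "mis n phi = mis n psi"
    have "phi = removeAll (mis n phi) (insert_mis n phi i)"
      using assms(1) by (simp add: removeAll_mis_insert_mis)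
    also have "\<dots> = removeAll (mis n psi) (insert_mis n psi j)"
      using eq \<open>mis n phi = mis n psi\<close> by simp
    also have "\<dots> = psi" using assms(2) by (simp add: removeAll_mis_insert_mis)
    finally show False using \<open>phi \<noteq> psi\<close> by simp
  qed
  moreover have "(if i = 1 then mis n phi else phi ! 1) = (if j = 1 then mis n psi else psi ! 1)"
    using eq nth_one_take_Cons_drop[OF assms(4,5), of "mis n phi"]
      nth_one_take_Cons_drop[OF assms(6,7), of "mis n psi"]
    unfolding insert_mis_def by metis
  ultimately show ?thesis by (auto simp: mis_def split: if_splits)
qed

lemma insert_mis_one_in_perms:
  assumes "3 \<le> n" "seed n phi" "seed n psi"
    and succ: "mis n psi = oplus1 n (mis n phi)"
    and del: "removeAll (mis n psi) phi = removeAll (mis n phi) psi"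
  shows "insert_mis n phi 1 \<in> perms n psi"
proof -
  define a b where "a = mis n phi" and "b = mis n psi"
  have a: "a \<in> {1..n-1}" and b: "b \<in> {1..n-1}"
    using assms(1) oplus1_range by (simp_all add: a_def b_def mis_def)
  have "oplus1 n (psi ! 1) = oplus1 n a" using succ by (simp add: a_def mis_def)
  then have psi1: "psi ! 1 = a"
    using inj_onD[OF inj_on_oplus1 _ seed_nth_one_range[OF assms(1,3)] a] by simp
  have "b \<noteq> a" using succ oplus1_neq_self assms(1) by (simp add: a_def b_def)
  obtain t where phi: "phi = n # t" using seed_eq_Cons[OF assms(1,2)] by blast
  obtain u where psi: "psi = n # a # u" using seed_eq_Cons[OF assms(1,3)] psi1 by metis
  have del': "removeAll b phi = removeAll a psi" using del by (simp add: a_def b_def)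
  have "a \<notin> set u" using assms(3) psi by (simp add: seed_def)
  moreover have "a \<noteq> n" "b \<noteq> n" using a b assms(1) by auto
  ultimately have "removeAll b t = u" using del' phi psi by simp
  have L: "insert_mis n phi 1 = n # a # t" using phi by (simp add: insert_mis_def a_def)
  text \<open>If \<open>b\<close> were missing from \<open>phi\<close>, deleting it would not shorten \<open>phi\<close>,
    while deleting \<open>a = psi ! 1\<close> does shorten \<open>psi\<close>.\<close>
  have "b \<in> set phi"
  proof (rule ccontr)
    assume "b \<notin> set phi"
    then have "length phi = length (removeAll a psi)" using del' by simp
    also have "\<dots> < length psi" using psi by (intro length_removeAll_less) simp
    finally show False using assms(2,3) by (simp add: seed_def)
  qed
  then have "b \<in> set (insert_mis n phi 1)" unfolding insert_mis_def set_take_Cons_drop by simp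
  moreover have "removeAll b (insert_mis n phi 1) = psi"
    using L psi \<open>b \<noteq> a\<close> \<open>b \<noteq> n\<close> \<open>removeAll b t = u\<close> by simp
  ultimately obtain i where "i \<le> length psi"
      and "insert_mis n phi 1 = take i psi @ b # drop i psi"
    using take_Cons_drop_removeAll[OF distinct_insert_mis[OF assms(2)]] by metis
  then show ?thesis using insert_mis_in_perms[of i psi n] by (simp add: insert_mis_def b_def)
qed

theorem mainTheorem2:
  fixes n :: nat and phi psi :: "nat list"
  assumes "n \<ge> 5" and "seed n phi" and "seed n psi" and "phi \<noteq> psi"
  shows "perms n phi \<inter> perms n psi \<noteq> {} \<longleftrightarrow>
    ((mis n phi = oplus1 n (mis n psi) \<or> mis n psi = oplus1 n (mis n phi))
     \<and> removeAll (mis n psi) phi = removeAll (mis n phi) psi)"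
proof
  assume "perms n phi \<inter> perms n psi \<noteq> {}"
  then obtain x where x: "x \<in> perms n phi" "x \<in> perms n psi" by blast
  have "3 \<le> n" using assms(1) by simp
  then obtain i j where "1 \<le> i" "i \<le> length phi" "1 \<le> j" "j \<le> length psi"
      and "insert_mis n phi i = insert_mis n psi j"
    using perms_meet_imp_insert_mis_eq[OF _ assms(2,3) x] by blast
  then show "(mis n phi = oplus1 n (mis n psi) \<or> mis n psi = oplus1 n (mis n phi))
     \<and> removeAll (mis n psi) phi = removeAll (mis n phi) psi"
    using assms(2-4) insert_mis_eq_imp_mis_adjacent insert_mis_eq_imp_removeAll_eq by blast
next
  assume adjacent: "(mis n phi = oplus1 n (mis n psi) \<or> mis n psi = oplus1 n (mis n phi))
     \<and> removeAll (mis n psi) phi = removeAll (mis n phi) psi"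
  have "1 \<le> length phi" "1 \<le> length psi" using assms(1-3) by (simp_all add: seed_def)
  then have "insert_mis n phi 1 \<in> perms n phi \<inter> perms n psi
      \<or> insert_mis n psi 1 \<in> perms n phi \<inter> perms n psi"
    using adjacent assms(1-3) insert_mis_one_in_perms[of n phi psi] insert_mis_one_in_perms[of n psi phi]
    by (auto simp: insert_mis_in_perms)
  then show "perms n phi \<inter> perms n psi \<noteq> {}" by blast
qed

end
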